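(* Let $G$ be a finite simple graph and $\mathcal{N}G$ its normal graph algebra over a field $\mathbb{F}$ of characteristic not $2$. Let $\mathrm{ann}\,G=\{u\in U_G : uv=0 \text{ for all } v\in U_G\}$. Then $\mathrm{ann}\,G=\{u\in U_G: u^2=0\}$, and also $\mathrm{ann}\,G=\bigcap_{\mathfrak{e}\in EG}\ker\lambda_{\mathfrak{e}}$.
   Context: For a finite simple graph $G$ with vertex set $VG$ and edge set $EG$ (edge with endpoints $x,y$ written $[x,y]$, adjacency written $x\sim y$), the normal graph algebra $\mathcal{N}G$ is the $\mathbb{F}$-vector space $U_G\oplus\mathfrak{Z}_G$, where $U_G$ has basis $VG$ and $\mathfrak{Z}_G$ has basis $EG$, with commutative bilinear product determined on basis elements by: for distinct vertices $x,y$, $xy=[x,y]$ if $x\sim y$ and $xy=0$ otherwise; $x^2=\sum_{y\sim x}[x,y]$; all products involving an element of $\mathfrak{Z}_G$ are $0$. Equivalently, for $u=\sum_x\theta_x x$ and $v=\sum_x\eta_x x$, $uv=\sum_{[x,y]\in EG}(\theta_x+\theta_y)(\eta_x+\eta_y)[x,y]$. For an edge $\mathfrak{e}=[a,b]$, $\lambda_{\mathfrak{e}}$ is the linear functional on $U_G$ with $\lambda_{\mathfrak{e}}(a)=\lambda_{\mathfrak{e}}(b)=1$ and $\lambda_{\mathfrak{e}}(c)=0$ for all other vertices $c$. *)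

theory Defs
  imports Main
begin

text \<open>A finite simple graph: finite vertex set V and a symmetric irreflexive
adjacency relation E (only adjacencies between vertices of V matter).
Edges are represented as two-element vertex sets.\<close>

definition simple_graph :: "'v set \<Rightarrow> ('v \<Rightarrow> 'v \<Rightarrow> bool) \<Rightarrow> bool" where
  "simple_graph V E \<longleftrightarrow> finite V \<and> (\<forall>x y. E x y \<longrightarrow> E y x) \<and> (\<forall>x. \<not> E x x)"

definition graph_edges :: "'v set \<Rightarrow> ('v \<Rightarrow> 'v \<Rightarrow> bool) \<Rightarrow> 'v set set" where
  "graph_edges V E = {{x, y} | x y. x \<in> V \<and> y \<in> V \<and> E x y}"

text \<open>Elements of U_G: coefficient vectors over the basis V (zero outside V).
Elements of Z_G: coefficient vectors over the basis EG (functions on 2-sets,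
zero outside EG).\<close>

definition UG :: "'v set \<Rightarrow> ('v \<Rightarrow> 'a::field) set" where
  "UG V = {u. \<forall>x. x \<notin> V \<longrightarrow> u x = 0}"

text \<open>Product of basis vertices x, y, as a coefficient vector on edges:
for x \<noteq> y, xy = [x,y] if x ~ y and 0 otherwise; x^2 = sum of [x,y] over y ~ x.\<close>

definition basis_prod :: "'v set \<Rightarrow> ('v \<Rightarrow> 'v \<Rightarrow> bool) \<Rightarrow> 'v \<Rightarrow> 'v \<Rightarrow> 'v set \<Rightarrow> 'a::field" where
  "basis_prod V E x y e =
     (if x \<noteq> y then (if E x y \<and> e = {x, y} then 1 else 0)
      else (if e \<in> graph_edges V E \<and> x \<in> e then 1 else 0))"

definition nga_mult :: "'v set \<Rightarrow> ('v \<Rightarrow> 'v \<Rightarrow> bool) \<Rightarrow> ('v \<Rightarrow> 'a::field) \<Rightarrow> ('v \<Rightarrow> 'a) \<Rightarrow> 'v set \<Rightarrow> 'a" where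
  "nga_mult V E u v = (\<lambda>e. \<Sum>x\<in>V. \<Sum>y\<in>V. u x * v y * basis_prod V E x y e)"

text \<open>The functional lambda_e for an edge e = [a,b]: lambda_e(a) = lambda_e(b) = 1, others 0.\<close>

definition edge_functional :: "'v set \<Rightarrow> ('v \<Rightarrow> 'a::field) \<Rightarrow> 'a" where
  "edge_functional e u = (\<Sum>x\<in>e. u x)"

definition ann_G :: "'v set \<Rightarrow> ('v \<Rightarrow> 'v \<Rightarrow> bool) \<Rightarrow> ('v \<Rightarrow> 'a::field) set" where
  "ann_G V E = {u \<in> UG V. \<forall>v \<in> UG V. nga_mult V E u v = (\<lambda>_. 0)}"

end

theory Submission
  imports Defs
begin

text \<open>On an edge \<open>e\<close> the product is \<open>(uv)\<^sub>e = \<lambda>\<^sub>e(u) \<lambda>\<^sub>e(v)\<close>, and it vanishes off the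
  edges. Hence \<open>u\<^sup>2 = 0\<close> forces every \<open>\<lambda>\<^sub>e(u)\<^sup>2\<close>, and thus every \<open>\<lambda>\<^sub>e(u)\<close>, to vanish, and
  \<open>\<lambda>\<^sub>e(u) = 0\<close> for all edges kills every product \<open>uv\<close>.\<close>

lemma graph_edgesE:
  assumes "simple_graph V E" and "e \<in> graph_edges V E"
  obtains a b where "e = {a, b}" "a \<in> V" "b \<in> V" "a \<noteq> b" "E a b" "E b a"
  using assms unfolding simple_graph_def graph_edges_def by blast

lemma basis_prod_graph_edge:
  assumes "simple_graph V E" and "e \<in> graph_edges V E" and "x \<in> V" "y \<in> V"
  shows "(basis_prod V E x y e :: 'a::field) = (if x \<in> e \<and> y \<in> e then 1 else 0)"
proof -
  obtain a b where "e = {a, b}" "a \<noteq> b" "E a b" "E b a"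
    using graph_edgesE[OF assms(1,2)] by metis
  with assms(2) show ?thesis
    unfolding basis_prod_def by (auto simp: doubleton_eq_iff)
qed

lemma basis_prod_not_graph_edge:
  assumes "e \<notin> graph_edges V E" and "x \<in> V" "y \<in> V"
  shows "(basis_prod V E x y e :: 'a::field) = 0"
  using assms unfolding basis_prod_def graph_edges_def by auto

lemma nga_mult_not_graph_edge:
  assumes "e \<notin> graph_edges V E"
  shows "nga_mult V E u v e = (0::'a::field)"
  unfolding nga_mult_def by (auto intro!: sum.neutral simp: basis_prod_not_graph_edge[OF assms])

lemma nga_mult_graph_edge:
  assumes sg: "simple_graph V E" and e: "e \<in> graph_edges V E"
  shows "nga_mult V E u v e = edge_functional e u * (edge_functional e v :: 'a::field)"
proof -
  have "finite V" using sg unfolding simple_graph_def by simp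
  have "e \<subseteq> V" using graph_edgesE[OF sg e] by blast
  then have "V \<inter> e = e" by blast
  have "nga_mult V E u v e
      = (\<Sum>x\<in>V. if x \<in> e then (\<Sum>y\<in>V. if y \<in> e then u x * v y else 0) else 0)"
    unfolding nga_mult_def
    by (intro sum.cong refl) (simp add: basis_prod_graph_edge[OF sg e] if_distrib cong: if_cong)
  also have "\<dots> = (\<Sum>x\<in>e. \<Sum>y\<in>e. u x * v y)"
    by (simp only: sum.inter_restrict[OF \<open>finite V\<close>, symmetric] \<open>V \<inter> e = e\<close>)
  also have "\<dots> = edge_functional e u * edge_functional e v"
    unfolding edge_functional_def by (rule sum_product[symmetric])
  finally show ?thesis .
qed

theorem proposition5p3:
  fixes V :: "'v set" and E :: "'v \<Rightarrow> 'v \<Rightarrow> bool"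
  assumes "simple_graph V E"
    and "(2::'a::field) \<noteq> 0"
  shows "(ann_G V E :: ('v \<Rightarrow> 'a) set) = {u \<in> UG V. nga_mult V E u u = (\<lambda>_. 0)}
    \<and> (ann_G V E :: ('v \<Rightarrow> 'a) set) =
        {u \<in> UG V. \<forall>e \<in> graph_edges V E. edge_functional e u = 0}"
proof -
  let ?A = "ann_G V E :: ('v \<Rightarrow> 'a) set"
  let ?S = "{u \<in> UG V. nga_mult V E u u = (\<lambda>_. 0)} :: ('v \<Rightarrow> 'a) set"
  let ?K = "{u \<in> UG V. \<forall>e \<in> graph_edges V E. edge_functional e u = 0} :: ('v \<Rightarrow> 'a) set"
  have "?A \<subseteq> ?S"
    unfolding ann_G_def by auto
  moreover have "?S \<subseteq> ?K"
  proof safe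
    fix u :: "'v \<Rightarrow> 'a" and e
    assume "nga_mult V E u u = (\<lambda>_. 0)" and "e \<in> graph_edges V E"
    then have "edge_functional e u * edge_functional e u = 0"
      using nga_mult_graph_edge[OF assms(1), of e u u] by simp
    then show "edge_functional e u = 0" by simp
  qed
  moreover have "?K \<subseteq> ?A"
  proof (unfold ann_G_def, safe)
    fix u v :: "'v \<Rightarrow> 'a"
    assume "\<forall>e \<in> graph_edges V E. edge_functional e u = 0"
    then show "nga_mult V E u v = (\<lambda>_. 0)"
      using nga_mult_graph_edge[OF assms(1)] nga_mult_not_graph_edge by (metis mult_zero_left)
  qed
  ultimately show ?thesis by blast
qed

end
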